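(* Let $k\ge1$ and $B>0$ with $B\neq2$ be constants and let $F$ be as defined below. For every $(\alpha_L,\alpha_R)\in[0,1]^2$, the iterates $F^{(t)}(\alpha_L,\alpha_R)=F\circ\cdots\circ F(\alpha_L,\alpha_R)$ ($t$ times) converge, as $t\to\infty$, to the unique fixed point of $F$ (which is $(1/2,1/2)$ if $B<2$, and the unique solution in $(1/2,1)^2$ of $\exp(B\sqrt k(1-2\alpha_R))=\frac{1-\alpha_L}{\alpha_L}$, $\exp(\frac{B}{\sqrt k}(1-2\alpha_L))=\frac{1-\alpha_R}{\alpha_R}$ if $B>2$).
   Context: The map $F$: for $(\alpha_L,\alpha_R)\in[0,1]^2$, if $\sqrt{\alpha_L\alpha_R}\,B\le1$ set $(\theta_L,\theta_R)=(0,0)$; otherwise let $(\theta_L,\theta_R)$ be the unique solution with $\theta_L,\theta_R>0$ of $\exp(-B\sqrt k\,\alpha_R\theta_R)=1-\theta_L$ and $\exp(-\frac{B}{\sqrt k}\alpha_L\theta_L)=1-\theta_R$. Then $F(\alpha_L,\alpha_R)=\big(\tfrac12(1+\theta_L\alpha_L),\tfrac12(1+\theta_R\alpha_R)\big)$. *)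

theory Defs
  imports "HOL-Analysis.Analysis"
begin

definition theta :: "real \<Rightarrow> real \<Rightarrow> real \<times> real \<Rightarrow> real \<times> real" where
  "theta B k a = (let aL = fst a; aR = snd a in
     if sqrt (aL * aR) * B \<le> 1 then (0, 0)
     else (THE th. fst th > 0 \<and> snd th > 0 \<and>
             exp (- B * sqrt k * aR * snd th) = 1 - fst th \<and>
             exp (- (B / sqrt k) * aL * fst th) = 1 - snd th))"

definition F :: "real \<Rightarrow> real \<Rightarrow> real \<times> real \<Rightarrow> real \<times> real" where
  "F B k a = (let th = theta B k a in
     ((1 + fst th * fst a) / 2, (1 + snd th * snd a) / 2))"

definition fp_eqs :: "real \<Rightarrow> real \<Rightarrow> real \<times> real \<Rightarrow> bool" where
  "fp_eqs B k a = (exp (B * sqrt k * (1 - 2 * snd a)) = (1 - fst a) / fst a \<and>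
                   exp ((B / sqrt k) * (1 - 2 * fst a)) = (1 - snd a) / snd a)"

end

theory Submission
  imports Defs
begin

text \<open>For the componentwise order, \<open>F\<close> is monotone on \<open>[0,1]\<^sup>2\<close> and maps it into
  \<open>[1/2,1]\<^sup>2\<close>. So the orbits of \<open>(1/2, 1/2)\<close> and \<open>(1, 1)\<close> are monotone and converge, every
  orbit is squeezed between them after one step, and both limits are fixed points. Uniqueness of
  the fixed point comes from strict subhomogeneity (\<open>l f(w) < f(l w)\<close> for \<open>0 < l < 1\<close>): in the
  variables \<open>u = 2\<alpha>\<^sub>L - 1\<close>, \<open>v = 2\<alpha>\<^sub>R - 1\<close> a fixed point other than \<open>(1/2, 1/2)\<close> solves
  \<open>u = tanh (B \<surd>k v / 2)\<close>, \<open>v = tanh (B u / (2 \<surd>k))\<close>, a system with increasing, strictly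
  subhomogeneous right-hand sides, which has at most one positive solution and none if \<open>B \<le> 2\<close>
  (as \<open>tanh w < w\<close>); and \<open>(1/2, 1/2)\<close> is fixed exactly when \<open>B \<le> 2\<close>. The same argument
  applied to \<open>\<theta> = 1 - exp (-c \<theta>')\<close> makes \<open>\<theta>\<close> well defined and monotone in \<open>\<alpha>\<close>.\<close>

section \<open>Strictly subhomogeneous maps\<close>

definition strictly_subhomogeneous :: "(real \<Rightarrow> real) \<Rightarrow> bool" where
  "strictly_subhomogeneous f \<longleftrightarrow> (\<forall>l w. 0 < l \<longrightarrow> l < 1 \<longrightarrow> 0 < w \<longrightarrow> l * f w < f (l * w))"

lemma strictly_subhomogeneous_scale:
  assumes "strictly_subhomogeneous f" and "0 < c"
  shows "strictly_subhomogeneous (\<lambda>w. f (c * w))"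
  using assms unfolding strictly_subhomogeneous_def
  by (metis mult.left_commute mult_pos_pos)

text \<open>The mean value theorem on \<open>[0, x]\<close> gives \<open>x f' x < f x\<close>, so \<open>f x / x\<close> is strictly
  decreasing.\<close>
lemma strictly_subhomogeneous_if_derivative_decreasing:
  fixes f f' :: "real \<Rightarrow> real"
  assumes f0: "f 0 = 0"
    and deriv: "\<And>x. 0 \<le> x \<Longrightarrow> (f has_real_derivative f' x) (at x)"
    and decreasing: "\<And>x y. 0 \<le> x \<Longrightarrow> x < y \<Longrightarrow> f' y < f' x"
  shows "strictly_subhomogeneous f"
proof -
  have tangent: "x * f' x < f x" if "0 < x" for x
  proof -
    obtain z where z: "0 < z" "z < x" "f x - f 0 = (x - 0) * f' z"
      using MVT2[OF \<open>0 < x\<close>, of f f'] deriv by auto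
    then show ?thesis using decreasing[of z x] \<open>0 < x\<close> f0 by simp
  qed
  have quotient_decreasing: "f b / b < f a / a" if "0 < a" "a < b" for a b
  proof -
    have "(\<lambda>x. f x / x) b < (\<lambda>x. f x / x) a"
    proof (rule DERIV_neg_imp_decreasing[OF \<open>a < b\<close>])
      fix x assume "a \<le> x" "x \<le> b"
      then have "0 < x" using \<open>0 < a\<close> by linarith
      have "((\<lambda>x. f x / x) has_real_derivative (f' x * x - f x * 1) / (x * x)) (at x)"
        using deriv \<open>0 < x\<close> by (intro DERIV_divide DERIV_ident) auto
      moreover have "(f' x * x - f x * 1) / (x * x) < 0"
        using tangent[OF \<open>0 < x\<close>] \<open>0 < x\<close> by (intro divide_neg_pos) (auto simp: mult.commute)
      ultimately show "\<exists>y. ((\<lambda>x. f x / x) has_real_derivative y) (at x) \<and> y < 0" by blast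
    qed
    then show ?thesis by simp
  qed
  show ?thesis unfolding strictly_subhomogeneous_def
  proof (intro allI impI)
    fix l w :: real assume "0 < l" "l < 1" "0 < w"
    then have "f w / w < f (l * w) / (l * w)" by (intro quotient_decreasing) auto
    with \<open>0 < l\<close> \<open>0 < w\<close> show "l * f w < f (l * w)" by (simp add: field_simps)
  qed
qed

text \<open>Shrink \<open>s\<close> by the largest factor \<open>l\<close> that puts it below \<open>t\<close>; if \<open>l < 1\<close>, strict
  subhomogeneity at the coordinate where \<open>l \<cdot> s\<close> touches \<open>t\<close> contradicts \<open>f t\<^sub>2 \<le> t\<^sub>1\<close>
  or \<open>g t\<^sub>1 \<le> t\<^sub>2\<close>.\<close>
lemma strictly_subhomogeneous_fixed_point_le:
  fixes f g :: "real \<Rightarrow> real"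
  assumes "mono f" "mono g" "strictly_subhomogeneous f" "strictly_subhomogeneous g"
    and s: "0 < s1" "0 < s2" "f s2 = s1" "g s1 = s2"
    and t: "0 < t1" "0 < t2" "f t2 \<le> t1" "g t1 \<le> t2"
  shows "s1 \<le> t1 \<and> s2 \<le> t2"
proof (rule ccontr)
  assume not_le: "\<not> (s1 \<le> t1 \<and> s2 \<le> t2)"
  define l where "l = min (t1 / s1) (t2 / s2)"
  have "0 < l" using s t by (simp add: l_def)
  have "l < 1"
    using not_le s by (auto simp: l_def min_less_iff_disj)
  have below: "l * s1 \<le> t1" "l * s2 \<le> t2"
    using s by (auto simp: l_def min_def field_simps)
  have "l * f s2 < f (l * s2)"
    using assms(3) \<open>0 < l\<close> \<open>l < 1\<close> s(2) by (simp add: strictly_subhomogeneous_def)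
  also have "\<dots> \<le> f t2" using \<open>mono f\<close> below(2) by (rule monoD)
  finally have shrink_f: "l * f s2 < f t2" .
  have "l * g s1 < g (l * s1)"
    using assms(4) \<open>0 < l\<close> \<open>l < 1\<close> s(1) by (simp add: strictly_subhomogeneous_def)
  also have "\<dots> \<le> g t1" using \<open>mono g\<close> below(1) by (rule monoD)
  finally have shrink_g: "l * g s1 < g t1" .
  consider "l = t1 / s1" | "l = t2 / s2" unfolding l_def by linarith
  then show False
  proof cases
    case 1
    then have "t1 = l * f s2" using s by simp
    then show False using shrink_f t by simp
  next
    case 2
    then have "t2 = l * g s1" using s by simp
    then show False using shrink_g t by simp
  qed
qed

lemma strictly_subhomogeneous_fixed_point_unique:
  fixes f g :: "real \<Rightarrow> real"
  assumes "mono f" "mono g" "strictly_subhomogeneous f" "strictly_subhomogeneous g"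
    and "0 < s1" "0 < s2" "f s2 = s1" "g s1 = s2"
    and "0 < t1" "0 < t2" "f t2 = t1" "g t1 = t2"
  shows "s1 = t1 \<and> s2 = t2"
  using strictly_subhomogeneous_fixed_point_le[OF assms(1-4), of s1 s2 t1 t2]
    strictly_subhomogeneous_fixed_point_le[OF assms(1-4), of t1 t2 s1 s2] assms(5-)
  by simp

lemma strictly_subhomogeneous_one_minus_exp: "strictly_subhomogeneous (\<lambda>w. 1 - exp (- w))"
proof (rule strictly_subhomogeneous_if_derivative_decreasing)
  show "((\<lambda>w. 1 - exp (- w)) has_real_derivative exp (- x)) (at x)" for x :: real
    by (auto intro!: derivative_eq_intros)
qed auto

lemma strictly_subhomogeneous_tanh: "strictly_subhomogeneous tanh"
proof (rule strictly_subhomogeneous_if_derivative_decreasing)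
  show "(tanh has_real_derivative 1 - (tanh x)\<^sup>2) (at x)" for x :: real
    by (auto intro!: derivative_eq_intros)
  show "1 - (tanh y)\<^sup>2 < 1 - (tanh x)\<^sup>2" if "0 \<le> x" "x < y" for x y :: real
    using that by (simp add: power_strict_mono)
qed simp

lemma tanh_real_less_self:
  fixes x :: real
  assumes "0 < x"
  shows "tanh x < x"
proof -
  have "(tanh has_real_derivative 1 - (tanh z)\<^sup>2) (at z)" for z :: real
    by (auto intro!: derivative_eq_intros)
  then obtain z where "0 < z" "tanh x - tanh 0 = (x - 0) * (1 - (tanh z)\<^sup>2)"
    using MVT2[OF assms, of tanh "\<lambda>z. 1 - (tanh z)\<^sup>2"] by blast
  then show ?thesis using assms by simp
qed

section \<open>The equations defining \<open>\<theta>\<close>\<close>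

definition theta_solution :: "real \<Rightarrow> real \<Rightarrow> real \<times> real \<Rightarrow> bool" where
  "theta_solution c1 c2 s \<longleftrightarrow>
     0 < fst s \<and> 0 < snd s \<and> exp (- (c1 * snd s)) = 1 - fst s \<and> exp (- (c2 * fst s)) = 1 - snd s"

lemma theta_solution_coeffs:
  assumes "theta_solution c1 c2 s"
  shows "0 < c1" "0 < c2" "1 < c1 * c2"
proof -
  have s: "0 < fst s" "0 < snd s" "exp (- (c1 * snd s)) = 1 - fst s"
      "exp (- (c2 * fst s)) = 1 - snd s"
    using assms by (auto simp: theta_solution_def)
  have "exp (- (c1 * snd s)) < 1" "exp (- (c2 * fst s)) < 1" using s by linarith+
  then have "0 < c1 * snd s" "0 < c2 * fst s" by simp_all
  then show c1: "0 < c1" and c2: "0 < c2" using s(1,2) zero_less_mult_pos2 by blast+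
  have "fst s < c1 * snd s" "snd s < c2 * fst s"
    using s exp_minus_greater[of "c1 * snd s"] exp_minus_greater[of "c2 * fst s"] by auto
  then have "fst s < c1 * c2 * fst s"
    using c1 by (metis mult.assoc mult_strict_left_mono order.strict_trans)
  then show "1 < c1 * c2" using s(1) by simp
qed

lemma theta_solution_mono:
  assumes s: "theta_solution c1 c2 s" and t: "theta_solution d1 d2 t"
    and "c1 \<le> d1" "c2 \<le> d2"
  shows "s \<le> t"
proof -
  have c: "0 < c1" "0 < c2" using theta_solution_coeffs[OF s] by simp_all
  have mono_exp: "mono (\<lambda>w. 1 - exp (- (c * w)))" if "0 < c" for c :: real
    using that by (auto intro!: monoI mult_left_mono)
  have "c1 * snd t \<le> d1 * snd t" "c2 * fst t \<le> d2 * fst t"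
    using assms t by (auto simp: theta_solution_def intro!: mult_right_mono)
  then have "exp (- (d1 * snd t)) \<le> exp (- (c1 * snd t))"
      "exp (- (d2 * fst t)) \<le> exp (- (c2 * fst t))"
    by simp_all
  then have super: "1 - exp (- (c1 * snd t)) \<le> fst t" "1 - exp (- (c2 * fst t)) \<le> snd t"
    using t unfolding theta_solution_def by linarith+
  have "fst s \<le> fst t \<and> snd s \<le> snd t"
    using s t c super strictly_subhomogeneous_scale[OF strictly_subhomogeneous_one_minus_exp]
    by (intro strictly_subhomogeneous_fixed_point_le[OF mono_exp mono_exp])
       (auto simp: theta_solution_def)
  then show ?thesis by (simp add: less_eq_prod_def)
qed

lemma theta_solution_unique:
  "theta_solution c1 c2 s \<Longrightarrow> theta_solution c1 c2 t \<Longrightarrow> s = t"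
  using theta_solution_mono[of c1 c2 s c1 c2 t] theta_solution_mono[of c1 c2 t c1 c2 s] by simp

text \<open>The slope of \<open>s \<mapsto> 1 - exp (-c\<^sub>1 (1 - exp (-c\<^sub>2 s))) - s\<close> at \<open>0\<close> is \<open>c\<^sub>1 c\<^sub>2 - 1 > 0\<close>,
  while its value at \<open>1\<close> is negative.\<close>
lemma theta_solution_exists:
  assumes "0 < c1" "0 < c2" "1 < c1 * c2"
  obtains s where "theta_solution c1 c2 s"
proof -
  define d where "d s = 1 - exp (- (c1 * (1 - exp (- (c2 * s))))) - s" for s
  have "(d has_real_derivative c1 * c2 - 1) (at 0)"
    unfolding d_def by (auto intro!: derivative_eq_intros)
  then obtain e where e: "0 < e" "\<And>h. 0 < h \<Longrightarrow> h < e \<Longrightarrow> d 0 < d (0 + h)"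
    using DERIV_pos_inc_right assms(3) by (metis diff_gt_0_iff_gt)
  define s0 where "s0 = min (e / 2) 1"
  have s0: "0 < s0" "s0 < e" "s0 \<le> 1" using e by (auto simp: s0_def)
  have "0 \<le> d s0" using e(2)[OF s0(1,2)] by (simp add: d_def)
  moreover have "d 1 \<le> 0" by (simp add: d_def)
  moreover have "continuous_on {s0..1} d" unfolding d_def by (intro continuous_intros)
  ultimately obtain x where x: "s0 \<le> x" "d x = 0" using IVT2'[of d 1 0 s0] s0(3) by auto
  have "0 < x" using x s0 by linarith
  then have "theta_solution c1 c2 (x, 1 - exp (- (c2 * x)))"
    using x assms(2) by (auto simp: theta_solution_def d_def)
  then show ?thesis by (rule that)
qed

lemma theta_threshold_iff:
  assumes "0 < k" "0 \<le> fst a" "0 \<le> snd a" "0 \<le> B"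
  shows "sqrt (fst a * snd a) * B \<le> 1 \<longleftrightarrow> (B * sqrt k * snd a) * (B / sqrt k * fst a) \<le> 1"
proof -
  have "sqrt (fst a * snd a) * B = sqrt ((B * sqrt k * snd a) * (B / sqrt k * fst a))"
    using assms by (simp add: real_sqrt_mult real_sqrt_mult_self field_simps)
  then show ?thesis by simp
qed

lemma theta_threshold_pos:
  assumes "0 \<le> fst a" "0 \<le> snd a" "\<not> sqrt (fst a * snd a) * B \<le> 1"
  shows "0 < B"
  using assms by (smt (verit) mult_nonneg_nonpos real_sqrt_ge_zero zero_le_mult_iff)

lemma theta_eq_solution:
  assumes "0 < k" "0 \<le> fst a" "0 \<le> snd a" and above: "\<not> sqrt (fst a * snd a) * B \<le> 1"
  shows "theta_solution (B * sqrt k * snd a) (B / sqrt k * fst a) (theta B k a)"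
proof -
  have "0 < B" using theta_threshold_pos assms by blast
  then have "0 \<le> B * sqrt k * snd a" "0 \<le> B / sqrt k * fst a" using assms by simp_all
  moreover have "1 < (B * sqrt k * snd a) * (B / sqrt k * fst a)"
    using theta_threshold_iff[of k a B] assms \<open>0 < B\<close> by simp
  ultimately obtain s where s: "theta_solution (B * sqrt k * snd a) (B / sqrt k * fst a) s"
    using theta_solution_exists by (metis less_le mult_not_zero not_one_less_zero)
  have "theta B k a = (THE th. theta_solution (B * sqrt k * snd a) (B / sqrt k * fst a) th)"
    using above by (simp add: theta_def theta_solution_def mult.assoc)
  also have "\<dots> = s" using s theta_solution_unique by blast
  finally show ?thesis using s by simp
qed

lemma theta_zero_or_solution:
  assumes "0 < k" "0 \<le> fst a" "0 \<le> snd a"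
  shows "theta B k a = (0, 0) \<or>
    theta_solution (B * sqrt k * snd a) (B / sqrt k * fst a) (theta B k a)"
  using theta_eq_solution[OF assms, of B]
    by (cases "sqrt (fst a * snd a) * B \<le> 1") (auto simp: theta_def)

lemma theta_equations:
  assumes "0 < k" "0 \<le> fst a" "0 \<le> snd a"
  shows "0 \<le> fst (theta B k a)" "fst (theta B k a) < 1" "0 \<le> snd (theta B k a)"
      "snd (theta B k a) < 1"
    and "exp (- (B * sqrt k * snd a * snd (theta B k a))) = 1 - fst (theta B k a)"
    and "exp (- (B / sqrt k * fst a * fst (theta B k a))) = 1 - snd (theta B k a)"
proof -
  note cases = theta_zero_or_solution[OF assms, of B]
  show "0 \<le> fst (theta B k a)" "fst (theta B k a) < 1" "0 \<le> snd (theta B k a)"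
      "snd (theta B k a) < 1"
    using cases exp_gt_zero unfolding theta_solution_def by (smt (verit) fst_conv snd_conv)+
  show "exp (- (B * sqrt k * snd a * snd (theta B k a))) = 1 - fst (theta B k a)"
    "exp (- (B / sqrt k * fst a * fst (theta B k a))) = 1 - snd (theta B k a)"
    using cases by (auto simp: theta_solution_def)
qed

lemma theta_mono:
  assumes "0 < k" "0 \<le> fst a" "0 \<le> snd a" "a \<le> b"
  shows "theta B k a \<le> theta B k b"
proof -
  have b: "0 \<le> fst b" "0 \<le> snd b" using assms by (auto simp: less_eq_prod_def)
  show ?thesis
  proof (cases "sqrt (fst a * snd a) * B \<le> 1")
    case True
    then show ?thesis
      using theta_equations[OF \<open>0 < k\<close> b, of B] by (simp add: theta_def less_eq_prod_def)
  next
    case False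
    have "0 < B" using theta_threshold_pos assms False by blast
    have "sqrt (fst a * snd a) * B \<le> sqrt (fst b * snd b) * B"
      using assms \<open>0 < B\<close>
      by (intro mult_right_mono real_sqrt_le_mono mult_mono) (auto simp: less_eq_prod_def)
    then have "\<not> sqrt (fst b * snd b) * B \<le> 1" using False by linarith
    moreover have "B * sqrt k * snd a \<le> B * sqrt k * snd b"
        "B / sqrt k * fst a \<le> B / sqrt k * fst b"
      using assms \<open>0 < B\<close> by (auto simp: less_eq_prod_def divide_right_mono)
    ultimately show ?thesis
      using theta_solution_mono theta_eq_solution[OF assms(1-3) False]
        theta_eq_solution[OF assms(1) b]
      by blast
  qed
qed

section \<open>The map \<open>F\<close> and its fixed points\<close>

lemma F_maps_into_upper_square:
  assumes "0 < k" "a \<in> {0..1} \<times> {0..1}"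
  shows "F B k a \<in> {(1/2, 1/2)..(1, 1)}"
proof -
  have a: "0 \<le> fst a" "fst a \<le> 1" "0 \<le> snd a" "snd a \<le> 1" using assms(2) by auto
  note th = theta_equations[OF assms(1) a(1,3), of B]
  have "fst (theta B k a) * fst a \<le> 1" "snd (theta B k a) * snd a \<le> 1"
    using th a by (auto intro!: mult_le_one)
  moreover have "0 \<le> fst (theta B k a) * fst a" "0 \<le> snd (theta B k a) * snd a"
    using th a by auto
  ultimately show ?thesis by (simp add: F_def Let_def)
qed

lemma F_mono:
  assumes "0 < k" "a \<in> {0..1} \<times> {0..1}" "b \<in> {0..1} \<times> {0..1}" "a \<le> b"
  shows "F B k a \<le> F B k b"
proof -
  have a: "0 \<le> fst a" "0 \<le> snd a" and b: "0 \<le> fst b" "0 \<le> snd b" using assms(2,3) by auto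
  have "theta B k a \<le> theta B k b" by (rule theta_mono[OF assms(1) a assms(4)])
  then show ?thesis
    using a b assms(4) theta_equations[OF assms(1) a, of B] theta_equations[OF assms(1) b, of B]
    by (auto simp: F_def Let_def less_eq_prod_def intro!: mult_mono)
qed

lemma F_half_fixed_iff:
  assumes "0 < k"
  shows "F B k (1/2, 1/2) = (1/2, 1/2) \<longleftrightarrow> B \<le> 2"
proof (cases "B \<le> 2")
  case True
  then have "sqrt (1/4) * B \<le> 1" by (simp add: real_sqrt_divide)
  then have "theta B k (1/2, 1/2) = (0, 0)" by (simp add: theta_def)
  with True show ?thesis by (simp add: F_def)
next
  case False
  then have "theta_solution (B * sqrt k / 2) (B / sqrt k / 2) (theta B k (1/2, 1/2))"
    using theta_eq_solution[OF assms, of "(1/2, 1/2)" B] by (simp add: real_sqrt_divide)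
  then have "0 < fst (theta B k (1/2, 1/2))" by (simp add: theta_solution_def)
  then show ?thesis using False by (simp add: F_def Let_def)
qed

lemma half_affine_fixed_point:
  fixes t x :: real
  assumes "x = (1 + t * x) / 2" "0 < t" "t < 1"
  shows "1/2 < x" "x < 1" "t * x = 2 * x - 1" "1 - t = (1 - x) / x"
proof -
  have x: "x = 1 / (2 - t)" using assms by (simp add: field_simps)
  show "1/2 < x" "x < 1" using assms(2,3) unfolding x by (simp_all add: field_simps)
  show tx: "t * x = 2 * x - 1" using assms(1) by simp
  show "1 - t = (1 - x) / x" using tx assms(3) unfolding x by (simp add: field_simps)
qed

lemma F_fixed_point_cases:
  assumes "0 < k" "q \<in> {0..1} \<times> {0..1}" "F B k q = q"
  shows "q = (1/2, 1/2) \<or> q \<in> {1/2<..<1} \<times> {1/2<..<1} \<and> fp_eqs B k q"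
proof (cases "sqrt (fst q * snd q) * B \<le> 1")
  case True
  then show ?thesis using assms(3) by (simp add: F_def theta_def)
next
  case False
  obtain x y where q: "q = (x, y)" by fastforce
  obtain tL tR where th: "theta B k q = (tL, tR)" by fastforce
  have "0 \<le> x" "0 \<le> y" using assms(2) q by auto
  then have sol: "theta_solution (B * sqrt k * y) (B / sqrt k * x) (tL, tR)"
    using theta_eq_solution[OF assms(1), of q B] False q th by simp
  then have t: "0 < tL" "tL < 1" "0 < tR" "tR < 1"
    unfolding theta_solution_def by (smt (verit) exp_gt_zero fst_conv snd_conv)+
  have "x = (1 + tL * x) / 2" "y = (1 + tR * y) / 2" using assms(3) q th by (simp_all add: F_def)
  note x = half_affine_fixed_point[OF this(1) t(1,2)]
    and y = half_affine_fixed_point[OF this(2) t(3,4)]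
  have "B * sqrt k * y * tR = B * sqrt k * (tR * y)" "B / sqrt k * x * tL = B / sqrt k * (tL * x)"
    by (simp_all add: ac_simps)
  then have "B * sqrt k * (1 - 2 * y) = - (B * sqrt k * y * tR)"
      "B / sqrt k * (1 - 2 * x) = - (B / sqrt k * x * tL)"
    unfolding x(3) y(3) by (simp_all add: algebra_simps)
  then have "fp_eqs B k q" using sol x(4) y(4) by (simp add: fp_eqs_def theta_solution_def q)
  then show ?thesis using x(1,2) y(1,2) q by simp
qed

lemma tanh_eq_of_exp_eq_odds:
  fixes a x y :: real
  assumes "0 < x" "exp (a * (1 - 2 * y)) = (1 - x) / x"
  shows "2 * x - 1 = tanh (a / 2 * (2 * y - 1))"
proof -
  have "- 2 * (a / 2 * (2 * y - 1)) = a * (1 - 2 * y)" by (simp add: algebra_simps)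
  then have "tanh (a / 2 * (2 * y - 1)) = (1 - (1 - x) / x) / (1 + (1 - x) / x)"
    by (simp only: tanh_real_altdef assms(2))
  also have "\<dots> = 2 * x - 1" using assms(1) by (simp add: field_simps)
  finally show ?thesis by simp
qed

lemma fp_eqs_tanh:
  assumes "p \<in> {1/2<..<1} \<times> {1/2<..<1}" "fp_eqs B k p"
  shows "2 * fst p - 1 = tanh (B * sqrt k / 2 * (2 * snd p - 1))"
    and "2 * snd p - 1 = tanh (B / sqrt k / 2 * (2 * fst p - 1))"
proof -
  have "0 < fst p" "0 < snd p" using assms(1) by auto
  with assms(2) show "2 * fst p - 1 = tanh (B * sqrt k / 2 * (2 * snd p - 1))"
    and "2 * snd p - 1 = tanh (B / sqrt k / 2 * (2 * fst p - 1))"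
    unfolding fp_eqs_def by (blast intro: tanh_eq_of_exp_eq_odds)+
qed

lemma fp_eqs_unique:
  assumes "0 < k" "0 < B"
    and p: "p \<in> {1/2<..<1} \<times> {1/2<..<1}" "fp_eqs B k p"
    and q: "q \<in> {1/2<..<1} \<times> {1/2<..<1}" "fp_eqs B k q"
  shows "p = q"
proof -
  have mono_tanh: "mono (\<lambda>w. tanh (c * w))" if "0 < c" for c :: real
    using that by (auto intro!: monoI mult_left_mono)
  have c: "0 < B * sqrt k / 2" "0 < B / sqrt k / 2" using assms(1,2) by simp_all
  have "2 * fst p - 1 = 2 * fst q - 1 \<and> 2 * snd p - 1 = 2 * snd q - 1"
    using assms fp_eqs_tanh[OF p] fp_eqs_tanh[OF q]
    by (intro strictly_subhomogeneous_fixed_point_unique[OF mono_tanh[OF c(1)] mono_tanh[OF c(2)]]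
        strictly_subhomogeneous_scale[OF strictly_subhomogeneous_tanh] c) auto
  then show ?thesis by (simp add: prod_eq_iff)
qed

lemma fp_eqs_no_solution:
  assumes "0 < k" "0 < B" "B \<le> 2" "p \<in> {1/2<..<1} \<times> {1/2<..<1}"
  shows "\<not> fp_eqs B k p"
proof
  assume "fp_eqs B k p"
  define u v where "u = 2 * fst p - 1" and "v = 2 * snd p - 1"
  have uv: "0 < u" "0 < v" using assms(4) by (auto simp: u_def v_def)
  have c: "0 < B * sqrt k / 2" "0 < B / sqrt k / 2" using assms(1,2) by simp_all
  have "u < B * sqrt k / 2 * v" "v < B / sqrt k / 2 * u"
    using fp_eqs_tanh[OF assms(4) \<open>fp_eqs B k p\<close>] tanh_real_less_self c uv
    unfolding u_def v_def by (metis mult_pos_pos)+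
  then have "u < B * sqrt k / 2 * (B / sqrt k / 2 * u)"
    using c(1) by (smt (verit) mult_strict_left_mono)
  also have "\<dots> = (B / 2)\<^sup>2 * u" using assms(1) by (simp add: power2_eq_square field_simps)
  also have "\<dots> \<le> u" using assms(2,3) uv by (intro mult_left_le_one_le) (auto simp: power_le_one)
  finally show False by simp
qed

lemma F_fixed_point_unique:
  assumes "0 < k" "0 < B"
    and "p \<in> {0..1} \<times> {0..1}" "F B k p = p" and "q \<in> {0..1} \<times> {0..1}" "F B k q = q"
  shows "p = q"
proof (cases "B \<le> 2")
  case True
  then show ?thesis
    using F_fixed_point_cases[OF assms(1,3,4)] F_fixed_point_cases[OF assms(1,5,6)]
      fp_eqs_no_solution[OF assms(1,2) True] by auto
next
  case False
  then have "p \<noteq> (1/2, 1/2)" "q \<noteq> (1/2, 1/2)" using F_half_fixed_iff[OF assms(1)] assms(4,6) by auto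
  then show ?thesis
    using F_fixed_point_cases[OF assms(1,3,4)] F_fixed_point_cases[OF assms(1,5,6)]
      fp_eqs_unique[OF assms(1,2)] by blast
qed

text \<open>\<open>\<theta>\<close> is not shown to be continuous; instead its defining equations pass to the limit,
  and a nonzero limit is then the unique positive solution at the limit point.\<close>
lemma theta_limit:
  assumes "0 < k" "0 < B"
    and X: "X \<longlonglongrightarrow> x" "\<And>t. 0 \<le> fst (X t)" "\<And>t. 0 \<le> snd (X t)" "0 < fst x" "0 < snd x"
    and th: "(\<lambda>t. theta B k (X t)) \<longlonglongrightarrow> th" "th \<noteq> (0, 0)"
  shows "theta B k x = th"
proof -
  note eqs = theta_equations[OF assms(1) X(2,3), of B]
  have fst_X: "(\<lambda>t. fst (X t)) \<longlonglongrightarrow> fst x" and snd_X: "(\<lambda>t. snd (X t)) \<longlonglongrightarrow> snd x"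
    using X(1) by (auto intro: tendsto_fst tendsto_snd)
  have fst_th: "(\<lambda>t. fst (theta B k (X t))) \<longlonglongrightarrow> fst th"
    and snd_th: "(\<lambda>t. snd (theta B k (X t))) \<longlonglongrightarrow> snd th"
    using th(1) by (auto intro: tendsto_fst tendsto_snd)
  have "(\<lambda>t. exp (- (B * sqrt k * snd (X t) * snd (theta B k (X t))))) \<longlonglongrightarrow> 1 - fst th"
    unfolding eqs(5) by (intro tendsto_intros fst_th)
  moreover have "(\<lambda>t. exp (- (B * sqrt k * snd (X t) * snd (theta B k (X t)))))
      \<longlonglongrightarrow> exp (- (B * sqrt k * snd x * snd th))"
    by (intro tendsto_intros snd_X snd_th)
  ultimately have eq1: "exp (- (B * sqrt k * snd x * snd th)) = 1 - fst th"
    by (rule LIMSEQ_unique[rotated])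
  have "(\<lambda>t. exp (- (B / sqrt k * fst (X t) * fst (theta B k (X t))))) \<longlonglongrightarrow> 1 - snd th"
    unfolding eqs(6) by (intro tendsto_intros snd_th)
  moreover have "(\<lambda>t. exp (- (B / sqrt k * fst (X t) * fst (theta B k (X t)))))
      \<longlonglongrightarrow> exp (- (B / sqrt k * fst x * fst th))"
    by (intro tendsto_intros fst_X fst_th)
  ultimately have eq2: "exp (- (B / sqrt k * fst x * fst th)) = 1 - snd th"
    by (rule LIMSEQ_unique[rotated])
  have "0 \<le> fst th" "0 \<le> snd th"
    using eqs(1,3) by (auto intro: LIMSEQ_le_const[OF fst_th] LIMSEQ_le_const[OF snd_th])
  moreover have "fst th = 0 \<longleftrightarrow> snd th = 0" using eq1 eq2 assms(1,2) X(4,5) by auto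
  ultimately have "0 < fst th" "0 < snd th" using th(2) by (auto simp: prod_eq_iff)
  then have sol: "theta_solution (B * sqrt k * snd x) (B / sqrt k * fst x) th"
    using eq1 eq2 by (simp add: theta_solution_def)
  then have "\<not> sqrt (fst x * snd x) * B \<le> 1"
    using theta_solution_coeffs(3)[OF sol] theta_threshold_iff[OF assms(1)] X(4,5) assms(2) by auto
  from theta_eq_solution[OF assms(1) _ _ this] sol X(4,5) show ?thesis
    by (auto intro: theta_solution_unique)
qed

lemma F_fixed_of_orbit_limit:
  assumes "0 < k" "0 < B"
    and X: "\<And>t. X t \<in> {(1/2, 1/2)..(1, 1)}" "\<And>t. X (Suc t) = F B k (X t)" "X \<longlonglongrightarrow> p"
  shows "F B k p = p"
proof -
  have "p \<in> {(1/2, 1/2)..(1, 1)}"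
    using X(1,3) by (intro Lim_in_closed_set[OF closed_eucl_atLeastAtMost]) auto
  then have p: "1/2 \<le> fst p" "1/2 \<le> snd p" by (auto simp: less_eq_prod_def)
  have X_pos: "1/2 \<le> fst (X t)" "1/2 \<le> snd (X t)" for t
    using X(1)[of t] by (auto simp: less_eq_prod_def)
  define th where "th = ((2 * fst p - 1) / fst p, (2 * snd p - 1) / snd p)"
  have F_p: "F B k p = p" if "theta B k p = th" using that p by (simp add: F_def th_def)
  have "theta B k (X t) =
      ((2 * fst (X (Suc t)) - 1) / fst (X t), (2 * snd (X (Suc t)) - 1) / snd (X t))" for t
    using X(2)[of t] X_pos[of t] by (simp add: F_def Let_def prod_eq_iff field_simps)
  moreover have
    "(\<lambda>t. ((2 * fst (X (Suc t)) - 1) / fst (X t), (2 * snd (X (Suc t)) - 1) / snd (X t))) \<longlonglongrightarrow> th"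
    unfolding th_def using X(3) p
    by (intro tendsto_intros LIMSEQ_Suc[of "\<lambda>t. fst (X t)"] LIMSEQ_Suc[of "\<lambda>t. snd (X t)"]) auto
  ultimately have lim: "(\<lambda>t. theta B k (X t)) \<longlonglongrightarrow> th" by simp
  show ?thesis
  proof (cases "th = (0, 0)")
    case True
    text \<open>Then \<open>p = (1/2, 1/2)\<close>, and \<open>F (1/2, 1/2) \<le> F (X t) = X (Suc t)\<close> passes to the limit.\<close>
    then have p_half: "p = (1/2, 1/2)" using p by (simp add: th_def prod_eq_iff)
    have "F B k (1/2, 1/2) \<le> X (Suc t)" for t
      unfolding X(2) by (rule F_mono[OF assms(1)])
        (use X(1)[of t] in \<open>auto simp: less_eq_prod_def mem_Times_iff\<close>)
    then have "p \<in> {F B k (1/2, 1/2)..}"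
      by (intro Lim_in_closed_set[OF closed_eucl_atLeast _ _ LIMSEQ_Suc[OF X(3)]]) auto
    moreover have "F B k (1/2, 1/2) \<in> {(1/2, 1/2)..(1, 1)}"
      by (rule F_maps_into_upper_square[OF assms(1)]) auto
    ultimately show ?thesis using p_half by simp
  next
    case False
    then show ?thesis
      using X_pos lim p by (intro F_p theta_limit[OF assms(1,2) X(3)])
        (auto intro: order.trans[OF _ X_pos(1)] order.trans[OF _ X_pos(2)])
  qed
qed

section \<open>Monotone iteration in the plane\<close>

lemma monoseq_prod_convergent:
  fixes X :: "nat \<Rightarrow> real \<times> real"
  assumes "monoseq X" "\<And>t. X t \<in> {lo..hi}"
  obtains L where "X \<longlonglongrightarrow> L" "L \<in> {lo..hi}"
proof -
  have "monoseq (\<lambda>t. fst (X t))" "monoseq (\<lambda>t. snd (X t))"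
    using assms(1) unfolding monoseq_def less_eq_prod_def by blast+
  moreover have "range (\<lambda>t. fst (X t)) \<subseteq> {fst lo..fst hi}"
      "range (\<lambda>t. snd (X t)) \<subseteq> {snd lo..snd hi}"
    using assms(2) by (auto simp: less_eq_prod_def)
  then have "Bseq (\<lambda>t. fst (X t))" "Bseq (\<lambda>t. snd (X t))" using Limits.Bseq_eq_bounded by blast+
  ultimately have "convergent (\<lambda>t. fst (X t))" "convergent (\<lambda>t. snd (X t))"
    using Bseq_monoseq_convergent by blast+
  then obtain L1 L2 where "(\<lambda>t. fst (X t)) \<longlonglongrightarrow> L1" "(\<lambda>t. snd (X t)) \<longlonglongrightarrow> L2"
    unfolding convergent_def by blast
  then have "(\<lambda>t. (fst (X t), snd (X t))) \<longlonglongrightarrow> (L1, L2)" by (rule tendsto_Pair)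
  then have "X \<longlonglongrightarrow> (L1, L2)" by simp
  moreover have "(L1, L2) \<in> {lo..hi}"
    using calculation assms(2) by (intro Lim_in_closed_set[OF closed_eucl_atLeastAtMost]) auto
  ultimately show ?thesis by (rule that)
qed

lemma prod_tendsto_sandwich:
  fixes X Y Z :: "nat \<Rightarrow> real \<times> real"
  assumes "\<And>t. X t \<le> Y t" "\<And>t. Y t \<le> Z t" "X \<longlonglongrightarrow> p" "Z \<longlonglongrightarrow> p"
  shows "Y \<longlonglongrightarrow> p"
proof -
  have "(\<lambda>t. fst (Y t)) \<longlonglongrightarrow> fst p"
    by (rule real_tendsto_sandwich[OF _ _ tendsto_fst[OF assms(3)] tendsto_fst[OF assms(4)]])
      (use assms(1,2) in \<open>auto simp: less_eq_prod_def\<close>)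
  moreover have "(\<lambda>t. snd (Y t)) \<longlonglongrightarrow> snd p"
    by (rule real_tendsto_sandwich[OF _ _ tendsto_snd[OF assms(3)] tendsto_snd[OF assms(4)]])
      (use assms(1,2) in \<open>auto simp: less_eq_prod_def\<close>)
  ultimately have "(\<lambda>t. (fst (Y t), snd (Y t))) \<longlonglongrightarrow> (fst p, snd p)" by (rule tendsto_Pair)
  then show ?thesis by simp
qed

lemma mono_on_iterates_tendsto_fixed_point:
  fixes f :: "real \<times> real \<Rightarrow> real \<times> real"
  assumes "lo \<le> hi" and mono: "mono_on {lo..hi} f" and maps: "f ` {lo..hi} \<subseteq> {lo..hi}"
    and limit_fixed: "\<And>X p. (\<And>t. X t \<in> {lo..hi}) \<Longrightarrow> (\<And>t. X (Suc t) = f (X t)) \<Longrightarrow> X \<longlonglongrightarrow> p \<Longrightarrow> f p = p"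
    and unique: "\<And>p q. p \<in> {lo..hi} \<Longrightarrow> q \<in> {lo..hi} \<Longrightarrow> f p = p \<Longrightarrow> f q = q \<Longrightarrow> p = q"
  obtains p where "p \<in> {lo..hi}" "f p = p" "\<And>a. a \<in> {lo..hi} \<Longrightarrow> (\<lambda>t. (f ^^ t) a) \<longlonglongrightarrow> p"
proof -
  have orbit: "(f ^^ t) a \<in> {lo..hi}" if "a \<in> {lo..hi}" for a t
    using that maps by (induction t) (auto simp: image_subset_iff)
  have squeeze: "(f ^^ t) lo \<le> (f ^^ t) a \<and> (f ^^ t) a \<le> (f ^^ t) hi" if "a \<in> {lo..hi}" for a t
  proof (induction t)
    case (Suc t)
    have "(f ^^ t) lo \<in> {lo..hi}" "(f ^^ t) a \<in> {lo..hi}" "(f ^^ t) hi \<in> {lo..hi}"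
      using orbit that \<open>lo \<le> hi\<close> by simp_all
    with Suc.IH show ?case by (simp add: mono_onD[OF mono])
  qed (use that in auto)
  have ends: "lo \<in> {lo..hi}" "hi \<in> {lo..hi}" "f lo \<in> {lo..hi}" "f hi \<in> {lo..hi}"
    using \<open>lo \<le> hi\<close> maps by (auto simp: image_subset_iff)
  have "incseq (\<lambda>t. (f ^^ t) lo)"
  proof (rule incseq_SucI)
    show "(f ^^ t) lo \<le> (f ^^ Suc t) lo" for t
      using squeeze[OF ends(3), of t] by (simp add: funpow_Suc_right del: funpow.simps)
  qed
  then have lo_mono: "monoseq (\<lambda>t. (f ^^ t) lo)" by (rule incseq_imp_monoseq)
  have "decseq (\<lambda>t. (f ^^ t) hi)"
  proof (rule decseq_SucI)
    show "(f ^^ Suc t) hi \<le> (f ^^ t) hi" for t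
      using squeeze[OF ends(4), of t] by (simp add: funpow_Suc_right del: funpow.simps)
  qed
  then have hi_mono: "monoseq (\<lambda>t. (f ^^ t) hi)" by (rule decseq_imp_monoseq)
  obtain p where p: "(\<lambda>t. (f ^^ t) lo) \<longlonglongrightarrow> p" "p \<in> {lo..hi}"
    by (rule monoseq_prod_convergent[OF lo_mono orbit[OF ends(1)]])
  obtain q where q: "(\<lambda>t. (f ^^ t) hi) \<longlonglongrightarrow> q" "q \<in> {lo..hi}"
    by (rule monoseq_prod_convergent[OF hi_mono orbit[OF ends(2)]])
  have "f p = p" by (rule limit_fixed[OF orbit[OF ends(1)] _ p(1)]) simp
  moreover have "f q = q" by (rule limit_fixed[OF orbit[OF ends(2)] _ q(1)]) simp
  ultimately have "p = q" using p(2) q(2) by (rule unique[rotated 2])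
  show ?thesis
  proof (rule that[OF p(2) \<open>f p = p\<close>])
    fix a assume "a \<in> {lo..hi}"
    then have "(f ^^ t) lo \<le> (f ^^ t) a" "(f ^^ t) a \<le> (f ^^ t) hi" for t
      using squeeze by blast+
    then show "(\<lambda>t. (f ^^ t) a) \<longlonglongrightarrow> p"
      using p(1) q(1) unfolding \<open>p = q\<close> by (rule prod_tendsto_sandwich)
  qed
qed

lemma F_iterates_tendsto_fixed_point:
  assumes "0 < k" "0 < B"
  obtains p where "p \<in> {0..1} \<times> {0..1}" "F B k p = p"
    "\<And>a. a \<in> {0..1} \<times> {0..1} \<Longrightarrow> (\<lambda>t. (F B k ^^ t) a) \<longlonglongrightarrow> p"
proof -
  let ?U = "{(1/2, 1/2)..(1::real, 1::real)}"
  have upper: "?U \<subseteq> {0..1} \<times> {0..1}"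
    by (auto simp: less_eq_prod_def intro: order.trans[of 0 "1/2::real"])
  have le: "(1/2, 1/2) \<le> (1::real, 1::real)" by simp
  have mono: "mono_on ?U (F B k)"
  proof (rule mono_onI)
    show "F B k a \<le> F B k b" if "a \<in> ?U" "b \<in> ?U" "a \<le> b" for a b
      using that upper by (intro F_mono[OF assms(1)]) auto
  qed
  have maps: "F B k ` ?U \<subseteq> ?U"
    using upper F_maps_into_upper_square[OF assms(1)] by auto
  obtain p where p: "p \<in> ?U" "F B k p = p" and conv: "\<And>a. a \<in> ?U \<Longrightarrow> (\<lambda>t. (F B k ^^ t) a) \<longlonglongrightarrow> p"
  proof (rule mono_on_iterates_tendsto_fixed_point[OF le mono maps])
    show "F B k p = p" if "\<And>t. X t \<in> ?U" "\<And>t. X (Suc t) = F B k (X t)" "X \<longlonglongrightarrow> p" for X p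
      using F_fixed_of_orbit_limit[OF assms that] .
    show "p = q" if "p \<in> ?U" "q \<in> ?U" "F B k p = p" "F B k q = q" for p q
      using F_fixed_point_unique[OF assms _ that(3) _ that(4)] that(1,2) upper by blast
  qed blast
  show ?thesis
  proof (rule that)
    show "p \<in> {0..1} \<times> {0..1}" using p(1) upper by blast
    show "F B k p = p" by (rule p(2))
    fix a :: "real \<times> real" assume "a \<in> {0..1} \<times> {0..1}"
    then have "(\<lambda>t. (F B k ^^ t) (F B k a)) \<longlonglongrightarrow> p"
      by (intro conv F_maps_into_upper_square[OF assms(1)])
    then have "(\<lambda>t. (F B k ^^ Suc t) a) \<longlonglongrightarrow> p" by (simp add: funpow_Suc_right del: funpow.simps)
    then show "(\<lambda>t. (F B k ^^ t) a) \<longlonglongrightarrow> p" by (rule LIMSEQ_imp_Suc)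
  qed
qed

theorem lemma10:
  fixes B k :: real
  assumes "k \<ge> 1" and "B > 0" and "B \<noteq> 2"
  shows "\<exists>p \<in> {0..1} \<times> {0..1}.
           F B k p = p \<and>
           (\<forall>q \<in> {0..1} \<times> {0..1}. F B k q = q \<longrightarrow> q = p) \<and>
           (B < 2 \<longrightarrow> p = (1/2, 1/2)) \<and>
           (B > 2 \<longrightarrow> p \<in> {1/2<..<1} \<times> {1/2<..<1} \<and> fp_eqs B k p \<and>
              (\<forall>q \<in> {1/2<..<1} \<times> {1/2<..<1}. fp_eqs B k q \<longrightarrow> q = p)) \<and>
           (\<forall>a \<in> {0..1} \<times> {0..1}. (\<lambda>t. (F B k ^^ t) a) \<longlonglongrightarrow> p)"
proof -
  have k: "0 < k" using assms(1) by simp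
  obtain p where p: "p \<in> {0..1} \<times> {0..1}" "F B k p = p"
    and conv: "\<And>a. a \<in> {0..1} \<times> {0..1} \<Longrightarrow> (\<lambda>t. (F B k ^^ t) a) \<longlonglongrightarrow> p"
    using F_iterates_tendsto_fixed_point[OF k assms(2)] by blast
  have unique: "q = p" if "q \<in> {0..1} \<times> {0..1}" "F B k q = q" for q
    using F_fixed_point_unique[OF k assms(2) that p] .
  have half: "F B k (1/2, 1/2) = (1/2, 1/2) \<longleftrightarrow> B \<le> 2" by (rule F_half_fixed_iff[OF k])
  have small: "p = (1/2, 1/2)" if "B < 2" using half unique[of "(1/2, 1/2)"] that by simp
  have large: "p \<in> {1/2<..<1} \<times> {1/2<..<1} \<and> fp_eqs B k p" if "B > 2"
  proof -
    have "p \<noteq> (1/2, 1/2)" using half p(2) that by auto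
    then show ?thesis using F_fixed_point_cases[OF k p] by blast
  qed
  have large_unique: "q = p" if "B > 2" "q \<in> {1/2<..<1} \<times> {1/2<..<1}" "fp_eqs B k q" for q
    using large[OF that(1)] fp_eqs_unique[OF k assms(2) that(2,3)] by blast
  show ?thesis
  proof (intro bexI[of _ p] conjI ballI impI)
    show "p \<in> {0..1} \<times> {0..1}" "F B k p = p" by (fact p)+
  qed (simp_all add: unique small large large_unique conv)
qed

end
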